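(* Let $f_1,\dots,f_n:\mathbb{R}^d\to\mathbb{R}$ be such that each $f_i$ is $L_i$-smooth and $\mu_i$-strongly convex with minimizer $x_i$. Let $\alpha\in(0,1)$ and $\tilde f(x) = \frac{1}{n}\sum_{i=1}^n f_i(\alpha x + (1-\alpha)x_i)$, with minimizer $x^*$. Let $\overline{\mu} = \frac{1}{n}\sum_i\mu_i$. Then \[ \frac{1}{n}\sum_{i=1}^n\|x_i - x^*\|^2 \leq \frac{\max_i L_i}{\overline{\mu}}\max_{i,j}\|x_i - x_j\|^2. \]
   Context: A differentiable $g$ is $L$-smooth if $\|\nabla g(x)-\nabla g(y)\|\leq L\|x-y\|$ for all $x,y$, and $\mu$-strongly convex if $g(x)\geq g(y)+\langle\nabla g(y),x-y\rangle+\frac{\mu}{2}\|x-y\|^2$ for all $x,y$. *)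

theory Defs
  imports "HOL-Analysis.Analysis"
begin

definition L_smooth :: "real \<Rightarrow> ('a::real_inner \<Rightarrow> real) \<Rightarrow> bool" where
  "L_smooth L f \<longleftrightarrow> (\<exists>g. (\<forall>x. GDERIV f x :> g x) \<and>
      (\<forall>x y. norm (g x - g y) \<le> L * norm (x - y)))"

definition strongly_convex :: "real \<Rightarrow> ('a::real_inner \<Rightarrow> real) \<Rightarrow> bool" where
  "strongly_convex \<mu> f \<longleftrightarrow> (\<exists>g. (\<forall>x. GDERIV f x :> g x) \<and>
      (\<forall>x y. f x \<ge> f y + inner (g y) (x - y) + \<mu> / 2 * (norm (x - y))\<^sup>2))"

end

theory Submission
  imports Defs
begin

text \<open>Write \<open>F z = \<Sum>\<^sub>i f\<^sub>i (\<alpha> z + (1 - \<alpha>) x\<^sub>i)\<close>, so that \<open>n \<tilde>f = F\<close>. As a sum of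
  affinely reparametrised strongly convex functions, \<open>F\<close> is \<open>\<alpha>\<^sup>2 \<Sum>\<^sub>i \<mu>\<^sub>i\<close>-strongly convex,
  hence grows quadratically away from its minimiser \<open>x\<^sup>*\<close>. On the other hand, at \<open>z = x\<^sub>k\<close>
  the \<open>i\<close>-th summand is evaluated at \<open>x\<^sub>i + \<alpha> (x\<^sub>k - x\<^sub>i)\<close>, and \<open>L\<^sub>i\<close>-smoothness bounds it by
  \<open>f\<^sub>i (x\<^sub>i) + \<alpha>\<^sup>2 L\<^sub>i \<parallel>x\<^sub>k - x\<^sub>i\<parallel>\<^sup>2 / 2\<close>, while \<open>F (x\<^sup>*) \<ge> \<Sum>\<^sub>i f\<^sub>i (x\<^sub>i)\<close>. Comparing the two
  bounds and cancelling \<open>\<alpha>\<^sup>2 / 2\<close> gives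
  \<open>(\<Sum>\<^sub>i \<mu>\<^sub>i) \<parallel>x\<^sub>k - x\<^sup>*\<parallel>\<^sup>2 \<le> \<Sum>\<^sub>i L\<^sub>i \<parallel>x\<^sub>k - x\<^sub>i\<parallel>\<^sup>2\<close> for every \<open>k\<close>, which is
  stronger than the averaged claim.\<close>

lemma gderiv_eq_0_at_minimum:
  fixes f :: "'a::real_inner \<Rightarrow> real"
  assumes "GDERIV f x :> D" and "\<And>y. f x \<le> f y"
  shows "D = 0"
proof -
  have "(\<lambda>h. inner h D) = (\<lambda>h. 0)"
    by (rule has_derivative_local_min[OF assms(1)[unfolded gderiv_def]]) (simp add: assms(2))
  then have "inner D D = 0" by metis
  then show ?thesis by simp
qed

lemma gderiv_affine_compose:
  fixes f :: "'a::real_inner \<Rightarrow> real"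
  assumes "GDERIV f (a *\<^sub>R x + c) :> D"
  shows "GDERIV (\<lambda>z. f (a *\<^sub>R z + c)) x :> a *\<^sub>R D"
proof -
  have "((\<lambda>z. a *\<^sub>R z + c) has_derivative (\<lambda>h. a *\<^sub>R h)) (at x)"
    by (intro derivative_eq_intros) auto
  from has_derivative_compose[OF this assms[unfolded gderiv_def]]
  show ?thesis unfolding gderiv_def by simp
qed

lemma gderiv_sum:
  fixes f :: "'i \<Rightarrow> 'a::real_inner \<Rightarrow> real"
  assumes "finite I" and "\<And>i. i \<in> I \<Longrightarrow> GDERIV (f i) x :> D i"
  shows "GDERIV (\<lambda>z. \<Sum>i\<in>I. f i z) x :> (\<Sum>i\<in>I. D i)"
  using has_derivative_sum[of I "\<lambda>i. f i" "\<lambda>i h. inner h (D i)"] assms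
  unfolding gderiv_def by (simp add: inner_sum_right)

lemma lipschitz_gradient_quadratic_upper_bound:
  fixes f :: "'a::real_inner \<Rightarrow> real"
  assumes deriv: "\<And>x. GDERIV f x :> g x"
    and lipschitz: "\<And>x y. norm (g x - g y) \<le> L * norm (x - y)"
  shows "f (x + h) \<le> f x + inner (g x) h + L / 2 * (norm h)\<^sup>2"
proof -
  define \<phi> where "\<phi> t = f (x + t *\<^sub>R h) - t * inner (g x) h - L / 2 * t\<^sup>2 * (norm h)\<^sup>2" for t
  have \<phi>_deriv: "DERIV \<phi> t :> inner (g (x + t *\<^sub>R h) - g x) h - L * t * (norm h)\<^sup>2" for t
  proof -
    have "((\<lambda>t. x + t *\<^sub>R h) has_derivative (\<lambda>s. s *\<^sub>R h)) (at t)"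
      by (intro derivative_eq_intros) auto
    from has_derivative_compose[OF this deriv[unfolded gderiv_def]]
    have "((\<lambda>t. f (x + t *\<^sub>R h)) has_real_derivative inner (g (x + t *\<^sub>R h)) h) (at t)"
      unfolding has_field_derivative_def
      by (simp add: inner_commute mult.commute[of _ "inner h _"])
    then show ?thesis unfolding \<phi>_def
      by (auto intro!: derivative_eq_intros simp: power2_eq_square inner_diff_left)
  qed
  have "\<phi> 1 \<le> \<phi> 0"
  proof (rule DERIV_nonpos_imp_nonincreasing[of 0 1])
    fix t :: real assume t: "0 \<le> t" "t \<le> 1"
    have "inner (g (x + t *\<^sub>R h) - g x) h \<le> norm (g (x + t *\<^sub>R h) - g x) * norm h"
      by (rule norm_cauchy_schwarz)
    also have "\<dots> \<le> L * norm (t *\<^sub>R h) * norm h"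
      using lipschitz[of "x + t *\<^sub>R h" x] by (simp add: mult_right_mono)
    also have "\<dots> = L * t * (norm h)\<^sup>2" using t by (simp add: power2_eq_square)
    finally show "\<exists>y. DERIV \<phi> t :> y \<and> y \<le> 0" using \<phi>_deriv by force
  qed simp
  then show ?thesis unfolding \<phi>_def by simp
qed

lemma L_smooth_growth_from_minimum:
  fixes f :: "'a::real_inner \<Rightarrow> real"
  assumes "L_smooth L f" and "\<And>y. f x \<le> f y"
  shows "f (x + h) \<le> f x + L / 2 * (norm h)\<^sup>2"
proof -
  obtain g where deriv: "\<And>x. GDERIV f x :> g x"
    and lipschitz: "\<And>x y. norm (g x - g y) \<le> L * norm (x - y)"
    using assms(1) unfolding L_smooth_def by blast
  have "g x = 0" using gderiv_eq_0_at_minimum[OF deriv assms(2)] .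
  then show ?thesis using lipschitz_gradient_quadratic_upper_bound[OF deriv lipschitz, of x h] by simp
qed

lemma L_smooth_nonneg:
  fixes f :: "'a::euclidean_space \<Rightarrow> real"
  assumes "L_smooth L f"
  shows "L \<ge> 0"
proof -
  obtain g :: "'a \<Rightarrow> 'a" where "\<And>x y. norm (g x - g y) \<le> L * norm (x - y)"
    using assms unfolding L_smooth_def by blast
  obtain b :: 'a where "b \<in> Basis" using nonempty_Basis by blast
  then have "norm b > 0" by (simp add: nonzero_Basis)
  moreover have "0 \<le> L * norm b"
    using order_trans[OF norm_ge_zero \<open>norm (g b - g 0) \<le> L * norm (b - 0)\<close>] by simp
  ultimately show ?thesis by (simp add: zero_le_mult_iff)
qed

lemma strongly_convex_affine_compose:
  fixes f :: "'a::real_inner \<Rightarrow> real"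
  assumes "strongly_convex \<mu> f"
  shows "strongly_convex (a\<^sup>2 * \<mu>) (\<lambda>z. f (a *\<^sub>R z + c))"
proof -
  obtain g where deriv: "\<And>x. GDERIV f x :> g x"
    and lower: "\<And>x y. f x \<ge> f y + inner (g y) (x - y) + \<mu> / 2 * (norm (x - y))\<^sup>2"
    using assms unfolding strongly_convex_def by blast
  have "f (a *\<^sub>R x + c) \<ge> f (a *\<^sub>R y + c) + inner (a *\<^sub>R g (a *\<^sub>R y + c)) (x - y)
      + a\<^sup>2 * \<mu> / 2 * (norm (x - y))\<^sup>2" for x y
  proof -
    have "a *\<^sub>R x + c - (a *\<^sub>R y + c) = a *\<^sub>R (x - y)" by (simp add: algebra_simps)
    from lower[where x = "a *\<^sub>R x + c" and y = "a *\<^sub>R y + c", unfolded this] show ?thesis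
      by (simp add: power_mult_distrib mult_ac)
  qed
  then show ?thesis
    unfolding strongly_convex_def using gderiv_affine_compose[OF deriv]
    by (intro exI[where x = "\<lambda>z. a *\<^sub>R g (a *\<^sub>R z + c)"]) blast
qed

lemma strongly_convex_sum:
  fixes f :: "'i \<Rightarrow> 'a::real_inner \<Rightarrow> real"
  assumes "finite I" and "\<And>i. i \<in> I \<Longrightarrow> strongly_convex (\<mu> i) (f i)"
  shows "strongly_convex (\<Sum>i\<in>I. \<mu> i) (\<lambda>x. \<Sum>i\<in>I. f i x)"
proof -
  obtain g where deriv: "\<And>i x. i \<in> I \<Longrightarrow> GDERIV (f i) x :> g i x"
    and lower: "\<And>i x y. i \<in> I \<Longrightarrow>
      f i x \<ge> f i y + inner (g i y) (x - y) + \<mu> i / 2 * (norm (x - y))\<^sup>2"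
    using assms(2) unfolding strongly_convex_def by metis
  have "(\<Sum>i\<in>I. f i x) \<ge> (\<Sum>i\<in>I. f i y) + inner (\<Sum>i\<in>I. g i y) (x - y)
      + (\<Sum>i\<in>I. \<mu> i) / 2 * (norm (x - y))\<^sup>2" for x y
    using sum_mono[of I "\<lambda>i. f i y + inner (g i y) (x - y) + \<mu> i / 2 * (norm (x - y))\<^sup>2"]
      lower
    by (simp add: sum.distrib inner_sum_left sum_divide_distrib sum_distrib_right)
  moreover have "GDERIV (\<lambda>z. \<Sum>i\<in>I. f i z) x :> (\<Sum>i\<in>I. g i x)" for x
    using assms(1) deriv by (rule gderiv_sum)
  ultimately show ?thesis
    unfolding strongly_convex_def by (intro exI[where x = "\<lambda>x. \<Sum>i\<in>I. g i x"]) blast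
qed

lemma strongly_convex_growth_from_minimum:
  fixes f :: "'a::real_inner \<Rightarrow> real"
  assumes "strongly_convex \<mu> f" and "\<And>y. f x \<le> f y"
  shows "f x + \<mu> / 2 * (norm (y - x))\<^sup>2 \<le> f y"
proof -
  obtain g where deriv: "\<And>x. GDERIV f x :> g x"
    and lower: "\<And>x y. f x \<ge> f y + inner (g y) (x - y) + \<mu> / 2 * (norm (x - y))\<^sup>2"
    using assms(1) unfolding strongly_convex_def by blast
  have "g x = 0" using gderiv_eq_0_at_minimum[OF deriv assms(2)] .
  then show ?thesis using lower[where x = y and y = x] by simp
qed

lemma minimizer_of_contracted_sum_dist_bound:
  fixes f :: "'i \<Rightarrow> 'a::real_inner \<Rightarrow> real"
  assumes "finite I"
    and smooth: "\<And>i. i \<in> I \<Longrightarrow> L_smooth (L i) (f i)"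
    and sconv: "\<And>i. i \<in> I \<Longrightarrow> strongly_convex (\<mu> i) (f i)"
    and xm_min: "\<And>i y. i \<in> I \<Longrightarrow> f i (xm i) \<le> f i y"
    and "\<alpha> \<noteq> 0"
    and xstar_min: "\<And>y. (\<Sum>i\<in>I. f i (\<alpha> *\<^sub>R xstar + (1 - \<alpha>) *\<^sub>R xm i))
                         \<le> (\<Sum>i\<in>I. f i (\<alpha> *\<^sub>R y + (1 - \<alpha>) *\<^sub>R xm i))"
  shows "(\<Sum>i\<in>I. \<mu> i) * (norm (p - xstar))\<^sup>2 \<le> (\<Sum>i\<in>I. L i * (norm (p - xm i))\<^sup>2)"
proof -
  define F where "F z = (\<Sum>i\<in>I. f i (\<alpha> *\<^sub>R z + (1 - \<alpha>) *\<^sub>R xm i))" for z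
  have "strongly_convex (\<Sum>i\<in>I. \<alpha>\<^sup>2 * \<mu> i) F"
    unfolding F_def using assms(1) sconv
    by (intro strongly_convex_sum strongly_convex_affine_compose)
  then have "strongly_convex (\<alpha>\<^sup>2 * (\<Sum>i\<in>I. \<mu> i)) F" by (simp add: sum_distrib_left)
  from strongly_convex_growth_from_minimum[OF this, of xstar p] xstar_min
  have "F xstar + \<alpha>\<^sup>2 / 2 * ((\<Sum>i\<in>I. \<mu> i) * (norm (p - xstar))\<^sup>2) \<le> F p"
    unfolding F_def by (simp add: sum_distrib_left mult_ac)
  also have "F p = (\<Sum>i\<in>I. f i (xm i + \<alpha> *\<^sub>R (p - xm i)))"
    unfolding F_def by (simp add: algebra_simps)
  also have "\<dots> \<le> (\<Sum>i\<in>I. f i (xm i) + L i / 2 * (norm (\<alpha> *\<^sub>R (p - xm i)))\<^sup>2)"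
    using L_smooth_growth_from_minimum[OF smooth xm_min] by (intro sum_mono) blast
  also have "\<dots> \<le> F xstar + \<alpha>\<^sup>2 / 2 * (\<Sum>i\<in>I. L i * (norm (p - xm i))\<^sup>2)"
    using sum_mono[of I "\<lambda>i. f i (xm i)"] xm_min
    by (simp add: F_def sum.distrib sum_distrib_left power_mult_distrib mult_ac)
  finally show ?thesis using \<open>\<alpha> \<noteq> 0\<close> by simp
qed

theorem proposition6:
  fixes f :: "nat \<Rightarrow> 'a::euclidean_space \<Rightarrow> real"
    and L \<mu> :: "nat \<Rightarrow> real"
    and xm :: "nat \<Rightarrow> 'a"
    and xstar :: 'a
    and \<alpha> :: real
    and n :: nat
  assumes n_pos: "n \<ge> 1"
    and smooth: "\<And>i. i < n \<Longrightarrow> L_smooth (L i) (f i)"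
    and mu_pos: "\<And>i. i < n \<Longrightarrow> \<mu> i > 0"
    and sconv: "\<And>i. i < n \<Longrightarrow> strongly_convex (\<mu> i) (f i)"
    and xm_min: "\<And>i y. i < n \<Longrightarrow> f i (xm i) \<le> f i y"
    and alpha: "0 < \<alpha>" "\<alpha> < 1"
    and xstar_min: "\<And>y. (1 / real n) * (\<Sum>i<n. f i (\<alpha> *\<^sub>R xstar + (1 - \<alpha>) *\<^sub>R xm i))
                       \<le> (1 / real n) * (\<Sum>i<n. f i (\<alpha> *\<^sub>R y + (1 - \<alpha>) *\<^sub>R xm i))"
  shows "(1 / real n) * (\<Sum>i<n. (norm (xm i - xstar))\<^sup>2)
           \<le> (Max (L ` {..<n}) / ((1 / real n) * (\<Sum>i<n. \<mu> i)))
              * Max ((\<lambda>(i, j). (norm (xm i - xm j))\<^sup>2) ` ({..<n} \<times> {..<n}))"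
proof -
  define Lmax where "Lmax = Max (L ` {..<n})"
  define D where "D = Max ((\<lambda>(i, j). (norm (xm i - xm j))\<^sup>2) ` ({..<n} \<times> {..<n}))"
  have n_gt_0: "real n > 0" using n_pos by simp
  have mu_sum_pos: "(\<Sum>i<n. \<mu> i) > 0"
    using mu_pos n_pos by (intro sum_pos) (auto simp: lessThan_empty_iff)
  have sum_min: "(\<Sum>i<n. f i (\<alpha> *\<^sub>R xstar + (1 - \<alpha>) *\<^sub>R xm i))
      \<le> (\<Sum>i<n. f i (\<alpha> *\<^sub>R y + (1 - \<alpha>) *\<^sub>R xm i))" for y
    using xstar_min[of y] n_gt_0 by (simp add: divide_simps)
  have "(\<Sum>i<n. \<mu> i) * (norm (xm k - xstar))\<^sup>2 \<le> real n * (Lmax * D)" if "k < n" for k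
  proof -
    have "(\<Sum>i<n. \<mu> i) * (norm (xm k - xstar))\<^sup>2 \<le> (\<Sum>i<n. L i * (norm (xm k - xm i))\<^sup>2)"
      using sum_min alpha(1)
      by (intro minimizer_of_contracted_sum_dist_bound[where f = f and xm = xm and \<alpha> = \<alpha>])
        (auto simp: smooth sconv xm_min)
    also have "\<dots> \<le> (\<Sum>i<n. Lmax * D)"
    proof (intro sum_mono mult_mono')
      fix i assume "i \<in> {..<n}"
      then show "L i \<le> Lmax" "(norm (xm k - xm i))\<^sup>2 \<le> D" "0 \<le> L i"
        unfolding Lmax_def D_def using that L_smooth_nonneg[OF smooth]
        by (auto intro!: Max_ge)
    qed simp
    finally show ?thesis by simp
  qed
  then have "(\<Sum>k<n. (norm (xm k - xstar))\<^sup>2) \<le> (\<Sum>k<n. real n * (Lmax * D) / (\<Sum>i<n. \<mu> i))"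
    using mu_sum_pos by (intro sum_mono) (simp add: pos_le_divide_eq mult.commute)
  then show ?thesis
    unfolding Lmax_def[symmetric] D_def[symmetric] using n_gt_0
    by (simp add: field_simps)
qed

end
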